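(* There is an absolute constant $C$ such that for every local type $\mathcal T$ with encoding dimension $d$, the function $\mathrm{nearest\_left2}$ mapping a sequence $x\in\mathrm{Option}\langle\mathcal T\rangle^*$ to the sequence whose $p$-th entry is the pair consisting of the nearest and the second-nearest non-None entries strictly to the left of $p$ (each entry None if it does not exist), and likewise $\mathrm{nearest\_right2}$ (strictly to the right), are representable in $\mathrm{TF}(C(d+1),C,C)$; i.e. in $\mathrm{TF}(O(d),O(1),O(1))$.
   Context: A local type $\mathcal T$ is a finite set $S$ with an injective encoding $\phi_{\mathcal T}:S\to\mathbb{R}^{d}$. $\mathrm{Option}\langle\mathcal T\rangle$ has elements $\mathrm{Some}(t)$ and $\mathrm{None}$, encoded in $\mathbb{R}^{d+1}$ by $\mathrm{Some}(t)\mapsto(1,\phi_{\mathcal T}(t))$, $\mathrm{None}\mapsto0$; pairs are encoded by concatenation. Hard-attention transformer: attention layer $f_{\mathrm{attn}}(X)_p=W_O\,\mathrm{Concat}_h(\mathrm{Attn}^{(h)}(X)_p)$, $\mathrm{Attn}^{(h)}(X)_p=\frac1{|S_p|}\sum_{p'\in S_p}V^{(h)}_{p'}$, $S_p=\arg\max_{p'}\big(Q^{(h)\top}_pK^{(h)}_{p'}+\lambda^{(h)\top}\Psi_{p'-p}\big)$, with $Q,K,V$ linear in $X_p$, $\lambda^{(h)}\in\mathbb{R}^2$, $\Psi_q=(q,\mathbf 1_{q>0})^\top$; feed-forward layer $X_p\mapsto W_2\mathrm{ReLU}(W_1X_p+B_1)+B_2$ with hidden width $4d_{\mathrm{model}}$;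 layers $\hat X^{(l)}=X^{(l-1)}+f^{(l)}_{\mathrm{attn}}(X^{(l-1)})$, $X^{(l)}=\hat X^{(l)}+f^{(l)}_{\mathrm{ffn}}(\hat X^{(l)})$. $\mathrm{TF}(d_{\mathrm{model}},H,L)$ is the set of such transformers with model dimension $d_{\mathrm{model}}$, $H$ heads and $L$ layers (input sequences preceded by a distinguished starter token). A length-preserving $f:\mathcal A^*\to\mathcal B^*$ is representable in $\mathrm{TF}(d_{\mathrm{model}},H,L)$ if some transformer $F$ in the class satisfies $F((\iota\phi_{\mathcal A}(x_p))_p)_p=\iota\phi_{\mathcal B}(f(x)_p)$ for every sequence $x$ and position $p$, $\iota$ being zero-padding. *)

theory Defs
  imports Complex_Main
begin

type_synonym vec = "real list"
type_synonym mat = "real list list"  \<comment> \<open>list of rows\<close>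

definition is_mat :: "nat \<Rightarrow> nat \<Rightarrow> mat \<Rightarrow> bool" where
  "is_mat m n A \<longleftrightarrow> length A = m \<and> (\<forall>r\<in>set A. length r = n)"

definition dot :: "vec \<Rightarrow> vec \<Rightarrow> real" where
  "dot x y = sum_list (map2 (*) x y)"

definition mv :: "mat \<Rightarrow> vec \<Rightarrow> vec" where
  "mv A x = map (\<lambda>r. dot r x) A"

definition vadd :: "vec \<Rightarrow> vec \<Rightarrow> vec" where
  "vadd x y = map2 (+) x y"

record head =
  WQ :: mat
  WK :: mat
  WV :: mat
  lam :: "real \<times> real"

record layer =
  heads :: "head list"
  WO :: mat
  W1 :: mat
  B1 :: vec
  W2 :: mat
  B2 :: vec

record transformer =
  start :: vec          \<comment> \<open>encoding of the distinguished starter token\<close>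
  layers :: "layer list"

definition wf_head :: "nat \<Rightarrow> head \<Rightarrow> bool" where
  "wf_head dm h \<longleftrightarrow> is_mat dm dm (WQ h) \<and> is_mat dm dm (WK h) \<and> is_mat dm dm (WV h)"

definition wf_layer :: "nat \<Rightarrow> nat \<Rightarrow> layer \<Rightarrow> bool" where
  "wf_layer dm H l \<longleftrightarrow> length (heads l) = H \<and> (\<forall>h\<in>set (heads l). wf_head dm h)
     \<and> is_mat dm (H * dm) (WO l)
     \<and> is_mat (4 * dm) dm (W1 l) \<and> length (B1 l) = 4 * dm
     \<and> is_mat dm (4 * dm) (W2 l) \<and> length (B2 l) = dm"

definition TF :: "nat \<Rightarrow> nat \<Rightarrow> nat \<Rightarrow> transformer set" where
  "TF dm H L = {F. length (start F) = dm \<and> length (layers F) = L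
                  \<and> (\<forall>l\<in>set (layers F). wf_layer dm H l)}"

definition score :: "head \<Rightarrow> vec list \<Rightarrow> nat \<Rightarrow> nat \<Rightarrow> real" where
  "score h X p p' = dot (mv (WQ h) (X ! p)) (mv (WK h) (X ! p'))
      + fst (lam h) * (real p' - real p) + snd (lam h) * (if p' > p then 1 else 0)"

definition argmax_set :: "head \<Rightarrow> vec list \<Rightarrow> nat \<Rightarrow> nat set" where
  "argmax_set h X p = {p'. p' < length X \<and> (\<forall>q<length X. score h X p q \<le> score h X p p')}"

definition attn_head :: "head \<Rightarrow> vec list \<Rightarrow> nat \<Rightarrow> vec" where
  "attn_head h X p = map (\<lambda>i. (\<Sum>p'\<in>argmax_set h X p. mv (WV h) (X ! p') ! i)
                                 / real (card (argmax_set h X p))) [0..<length (WV h)]"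

definition f_attn :: "layer \<Rightarrow> vec list \<Rightarrow> nat \<Rightarrow> vec" where
  "f_attn l X p = mv (WO l) (concat (map (\<lambda>h. attn_head h X p) (heads l)))"

definition f_ffn :: "layer \<Rightarrow> vec \<Rightarrow> vec" where
  "f_ffn l x = vadd (mv (W2 l) (map (\<lambda>z. max 0 z) (vadd (mv (W1 l) x) (B1 l)))) (B2 l)"

definition apply_layer :: "layer \<Rightarrow> vec list \<Rightarrow> vec list" where
  "apply_layer l X =
     (let Xh = map (\<lambda>p. vadd (X ! p) (f_attn l X p)) [0..<length X]
      in map (\<lambda>x. vadd x (f_ffn l x)) Xh)"

text \<open>Run the transformer on an input sequence preceded by the starter token;
  position 0 of the result is the starter token.\<close>
definition run_tf :: "transformer \<Rightarrow> vec list \<Rightarrow> vec list" where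
  "run_tf F xs = fold apply_layer (layers F) (start F # xs)"

definition pad :: "nat \<Rightarrow> vec \<Rightarrow> vec" where
  "pad dm v = v @ replicate (dm - length v) 0"

definition representable ::
  "nat \<Rightarrow> nat \<Rightarrow> nat \<Rightarrow> 'a set \<Rightarrow> ('a \<Rightarrow> vec) \<Rightarrow> ('b \<Rightarrow> vec) \<Rightarrow> ('a list \<Rightarrow> 'b list) \<Rightarrow> bool" where
  "representable dm H L A encA encB f \<longleftrightarrow>
     (\<exists>F\<in>TF dm H L. \<forall>xs. set xs \<subseteq> A \<longrightarrow>
        (\<forall>p<length xs. run_tf F (map (\<lambda>a. pad dm (encA a)) xs) ! Suc p = pad dm (encB (f xs ! p))))"

text \<open>A local type: finite set S (w.l.o.g. of naturals) with injective encoding into R^d.\<close>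
definition local_type :: "nat set \<Rightarrow> nat \<Rightarrow> (nat \<Rightarrow> vec) \<Rightarrow> bool" where
  "local_type S d \<phi> \<longleftrightarrow> finite S \<and> inj_on \<phi> S \<and> (\<forall>t\<in>S. length (\<phi> t) = d)"

definition opt_set :: "'a set \<Rightarrow> 'a option set" where
  "opt_set S = insert None (Some ` S)"

definition enc_opt :: "nat \<Rightarrow> ('a \<Rightarrow> vec) \<Rightarrow> 'a option \<Rightarrow> vec" where
  "enc_opt d \<phi> u = (case u of None \<Rightarrow> replicate (Suc d) 0 | Some t \<Rightarrow> 1 # \<phi> t)"

definition enc_pair :: "('a \<Rightarrow> vec) \<Rightarrow> ('b \<Rightarrow> vec) \<Rightarrow> 'a \<times> 'b \<Rightarrow> vec" where
  "enc_pair e1 e2 ab = e1 (fst ab) @ e2 (snd ab)"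

definition nth_or_none :: "'a option list \<Rightarrow> nat \<Rightarrow> 'a option" where
  "nth_or_none L i = (if i < length L then L ! i else None)"

text \<open>L lists the non-None entries ordered by distance from p (nearest first).\<close>
definition nearest_left2 :: "'a option list \<Rightarrow> ('a option \<times> 'a option) list" where
  "nearest_left2 xs = map (\<lambda>p. let L = rev (filter (\<lambda>u. u \<noteq> None) (take p xs))
                                 in (nth_or_none L 0, nth_or_none L 1)) [0..<length xs]"

definition nearest_right2 :: "'a option list \<Rightarrow> ('a option \<times> 'a option) list" where
  "nearest_right2 xs = map (\<lambda>p. let L = filter (\<lambda>u. u \<noteq> None) (drop (Suc p) xs)
                                 in (nth_or_none L 0, nth_or_none L 1)) [0..<length xs]"

end

theory Submission
  imports Defs
begin

text \<open>In the transformers constructed here every layer after the first has a single active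
  hard-attention head whose score has a unique maximiser, so the layer copies blocks of the state
  found at one position. The first layer averages the starter flag over the prefix, which gives
  position \<open>p\<close> the weight \<open>1/(p + 1)\<close>; products of these weights let a head attend to its
  predecessor and, together with the positional term of the score, to the nearest position whose
  token is not \<open>None\<close>. To the right the indicator \<open>1\<^sub>q\<^sub>>\<^sub>p\<close> makes that search strict, and a
  second search from the position found yields the second-nearest token. To the left the indicator
  cannot exclude \<open>q = p\<close>, so every position first copies the token of its predecessor and then
  looks for the last marked position \<open>\<le> p\<close>; a second shift and search give the second-nearest
  token. A failed search lands on the starter, whose token block is empty and so encodes \<open>None\<close>.
  All of this fits into width \<open>11 (d + 1)\<close> with 11 heads and 11 layers.\<close>

definition vec_of :: "nat \<Rightarrow> (nat \<Rightarrow> real) \<Rightarrow> vec" where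
  "vec_of n f = map f [0..<n]"

definition mat_of :: "nat \<Rightarrow> nat \<Rightarrow> (nat \<Rightarrow> nat \<Rightarrow> real) \<Rightarrow> mat" where
  "mat_of m n F = map (\<lambda>i. map (F i) [0..<n]) [0..<m]"

lemma length_vec_of [simp]: "length (vec_of n f) = n"
  by (simp add: vec_of_def)

lemma nth_vec_of [simp]: "i < n \<Longrightarrow> vec_of n f ! i = f i"
  by (simp add: vec_of_def)

lemma is_mat_mat_of [simp]: "is_mat m n (mat_of m n F)"
  by (auto simp: is_mat_def mat_of_def)

lemma length_mat_of [simp]: "length (mat_of m n F) = m"
  by (simp add: mat_of_def)

lemma vec_of_cong: "(\<And>i. i < n \<Longrightarrow> f i = g i) \<Longrightarrow> vec_of n f = vec_of n g"
  by (simp add: vec_of_def)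

lemma vec_of_nth: "length x = n \<Longrightarrow> vec_of n (\<lambda>i. x ! i) = x"
  by (auto simp: vec_of_def intro: nth_equalityI)

lemma dot_vec_of: "dot (vec_of n f) (vec_of n g) = (\<Sum>j<n. f j * g j)"
proof -
  have "zip (map f [0..<n]) (map g [0..<n]) = map (\<lambda>j. (f j, g j)) [0..<n]"
    by (simp add: zip_map_map zip_same_conv_map comp_def)
  then show ?thesis
    by (simp add: dot_def vec_of_def sum_list_map_eq_sum_count atLeast0LessThan[symmetric]
          sum_set_upt_conv_sum_list_nat[symmetric] comp_def)
qed

lemma mv_mat_of:
  assumes "length x = n"
  shows "mv (mat_of m n F) x = vec_of m (\<lambda>i. \<Sum>j<n. F i j * x ! j)"
proof -
  have x: "x = vec_of n (\<lambda>j. x ! j)"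
    using assms by (simp add: vec_of_nth)
  show ?thesis
    unfolding mv_def mat_of_def by (subst x) (simp add: dot_vec_of[of n, unfolded vec_of_def] vec_of_def)
qed

lemma vadd_vec_of: "vadd (vec_of n f) (vec_of n g) = vec_of n (\<lambda>i. f i + g i)"
  by (simp add: vadd_def vec_of_def zip_map_map zip_same_conv_map comp_def)

subsection \<open>Attention scores and their unique maximisers\<close>

definition inv_succ :: "nat \<Rightarrow> real" where
  "inv_succ i = 1 / (real i + 1)"

lemma inv_succ_pos: "0 < inv_succ i"
  by (simp add: inv_succ_def)

lemma inv_succ_le_one: "inv_succ i \<le> 1"
  by (simp add: inv_succ_def)

lemma inv_succ_strict_anti: "i < j \<Longrightarrow> inv_succ j < inv_succ i"
  by (simp add: inv_succ_def frac_less2)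

lemma inv_succ_0 [simp]: "inv_succ 0 = 1"
  by (simp add: inv_succ_def)

definition cyclic_succ :: "nat \<Rightarrow> nat \<Rightarrow> nat" where
  "cyclic_succ n p = (if Suc p < n then Suc p else 0)"

lemma cyclic_succ_less: "0 < n \<Longrightarrow> cyclic_succ n p < n"
  by (simp add: cyclic_succ_def)

lemma cyclic_succ_score_max:
  assumes "p < n" "q < n" "q \<noteq> cyclic_succ n p"
  shows "inv_succ q + 2 * (if q > p then 1 else 0)
    < inv_succ (cyclic_succ n p) + 2 * (if cyclic_succ n p > p then 1 else 0)"
proof (cases "Suc p < n")
  case True
  then have succ: "cyclic_succ n p = Suc p"
    by (simp add: cyclic_succ_def)
  show ?thesis
  proof (cases "q > p")
    case True
    then have "Suc p < q"
      using assms succ by auto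
    then show ?thesis
      using succ True inv_succ_strict_anti[of "Suc p" q] by simp
  next
    case False
    then show ?thesis
      using succ inv_succ_le_one[of q] inv_succ_pos[of "Suc p"] by simp
  qed
next
  case False
  then have "cyclic_succ n p = 0" "q \<noteq> 0" "\<not> q > p"
    using assms by (auto simp: cyclic_succ_def)
  then show ?thesis
    using inv_succ_strict_anti[of 0 q] by simp
qed

text \<open>With \<open>a\<^sub>i = 1/(i+1)\<close> one has \<open>a\<^sub>q - a\<^sub>q\<^sub>+\<^sub>1 = a\<^sub>q a\<^sub>q\<^sub>+\<^sub>1\<close>, so away from the
  last position the score \<open>prev_score\<close> below is \<open>prev_profile p (q + 1)\<close>, a function of \<open>q + 1\<close>
  that peaks exactly at \<open>q + 1 = p\<close>.\<close>

definition prev_profile :: "nat \<Rightarrow> real \<Rightarrow> real" where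
  "prev_profile m x = 1 / ((real m + 1) * x) - (1/2 + 1 / (4 * (real m + 1))) / (x * (x + 1))"

lemma prev_profile_strict_max:
  fixes m x :: nat
  assumes "1 \<le> m" "1 \<le> x" "x \<noteq> m"
  shows "prev_profile m (real x) < prev_profile m (real m)"
proof -
  define M where "M = real m"
  define X where "X = real x"
  have M1: "M \<ge> 1" and X1: "X \<ge> 1"
    using assms by (simp_all add: M_def X_def)
  have factor: "(2*M+1)*X*(X+1) - (4*X+1-2*M)*M*(M+1) = (X-M)*((2*M+1)*X - (2*M-1)*(M+1))"
    by (simp add: algebra_simps)
  have pos: "(X-M)*((2*M+1)*X - (2*M-1)*(M+1)) > 0"
  proof (cases "x > m")
    case True
    then have "X \<ge> M + 1"
      by (simp add: X_def M_def)
    then have "(2*M+1)*X \<ge> (2*M+1)*(M+1)"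
      using M1 by (intro mult_left_mono) auto
    then show ?thesis
      using M1 \<open>X \<ge> M + 1\<close> by (intro mult_pos_pos) (simp_all add: algebra_simps)
  next
    case False
    then have "X \<le> M - 1"
      using assms by (simp add: X_def M_def)
    then have "(2*M+1)*X \<le> (2*M+1)*(M-1)"
      using M1 by (intro mult_left_mono) auto
    then show ?thesis
      using M1 \<open>X \<le> M - 1\<close> by (intro mult_neg_neg) (simp_all add: algebra_simps)
  qed
  have "prev_profile m M - prev_profile m X
     = ((2*M+1)*X*(X+1) - (4*X+1-2*M)*M*(M+1)) / (4*(M+1)*(M+1)*M*X*(X+1))"
    using M1 X1 unfolding prev_profile_def M_def[symmetric]
    by (simp add: divide_simps) (simp add: algebra_simps)
  also have "\<dots> > 0"
    using pos factor M1 X1 by (intro divide_pos_pos) auto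
  finally show ?thesis
    by (simp add: M_def X_def)
qed

lemma prev_profile_0_less:
  fixes x :: nat
  assumes "2 \<le> x"
  shows "prev_profile 0 (real x) < 5/8"
proof -
  define X where "X = real x"
  have X2: "X \<ge> 2"
    using assms by (simp add: X_def)
  have "5/8 - prev_profile 0 X = (5*X+2)*(X-1) / (8*X*(X+1))"
    using X2 unfolding prev_profile_def by (simp add: divide_simps) (simp add: algebra_simps)
  also have "\<dots> > 0"
    using X2 by (intro divide_pos_pos mult_pos_pos) auto
  finally show ?thesis
    by (simp add: X_def)
qed

definition prev_score :: "nat \<Rightarrow> nat \<Rightarrow> nat \<Rightarrow> real" where
  "prev_score n p q = inv_succ p * inv_succ q
     + (1/2 + inv_succ p / 4) * (- inv_succ q + inv_succ (cyclic_succ n q) - 2 * (if Suc q < n then 0 else 1))"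

lemma prev_score_eq_profile: "Suc q < n \<Longrightarrow> prev_score n p q = prev_profile p (real (Suc q))"
  by (simp add: prev_score_def prev_profile_def cyclic_succ_def inv_succ_def divide_simps)
    (simp add: algebra_simps)

lemma prev_score_last_neg:
  assumes "\<not> Suc q < n"
  shows "prev_score n p q < 0"
proof -
  have "prev_score n p q = inv_succ q * (3 * inv_succ p / 4 - 1/2) - 1/2 - inv_succ p / 4"
    using assms by (simp add: prev_score_def cyclic_succ_def field_simps)
  also have "\<dots> < 0"
  proof (cases "3 * inv_succ p / 4 - 1/2 \<ge> 0")
    case True
    have "inv_succ q * (3 * inv_succ p / 4 - 1/2) \<le> 1 * (3 * inv_succ p / 4 - 1/2)"
      using inv_succ_le_one[of q] True by (intro mult_right_mono) auto
    then show ?thesis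
      using inv_succ_le_one[of p] by simp
  next
    case False
    then have "inv_succ q * (3 * inv_succ p / 4 - 1/2) \<le> 0"
      using inv_succ_pos[of q] by (intro mult_nonneg_nonpos) auto
    then show ?thesis
      using inv_succ_pos[of p] by simp
  qed
  finally show ?thesis .
qed

lemma prev_score_target_pos:
  assumes "Suc (p - 1) < n"
  shows "0 < prev_score n p (p - 1)"
proof (cases p)
  case 0
  then show ?thesis
    using assms by (simp add: prev_score_def cyclic_succ_def inv_succ_def)
next
  case (Suc m)
  have "prev_score n p (p - 1) = (1/2 - 1 / (4 * (real p + 1))) / (real p * (real p + 1))"
    using prev_score_eq_profile[OF assms, of p] Suc by (simp add: prev_profile_def divide_simps)
  also have "\<dots> > 0"
    using Suc by (intro divide_pos_pos) (simp_all add: divide_simps)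
  finally show ?thesis .
qed

lemma prev_score_max:
  assumes "p < n" "q < n" "q \<noteq> p - 1"
  shows "prev_score n p q < prev_score n p (p - 1)"
proof -
  have target_regular: "Suc (p - 1) < n"
    using assms by (cases p) auto
  show ?thesis
  proof (cases "Suc q < n")
    case False
    then show ?thesis
      using prev_score_last_neg[OF False, of p] prev_score_target_pos[OF target_regular] by linarith
  next
    case True
    show ?thesis
    proof (cases p)
      case 0
      then have "prev_score n p q < 5/8"
        using prev_score_eq_profile[OF True, of p] prev_profile_0_less[of "Suc q"] assms by simp
      also have "5/8 = prev_score n p (p - 1)"
        using 0 target_regular by (simp add: prev_score_def cyclic_succ_def inv_succ_def)
      finally show ?thesis .
    next
      case (Suc m)
      then show ?thesis
        using prev_score_eq_profile[OF True, of p] prev_score_eq_profile[OF target_regular, of p]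
          prev_profile_strict_max[of p "Suc q"] assms by simp
    qed
  qed
qed

definition last_marked :: "(nat \<Rightarrow> real) \<Rightarrow> nat \<Rightarrow> nat" where
  "last_marked c p = (if \<exists>j\<le>p. c j = 1 then GREATEST j. j \<le> p \<and> c j = 1 else 0)"

lemma last_marked_props:
  assumes "\<exists>j\<le>p. c j = 1"
  shows "last_marked c p \<le> p" "c (last_marked c p) = 1"
    "\<And>j. j \<le> p \<Longrightarrow> c j = 1 \<Longrightarrow> j \<le> last_marked c p"
proof -
  obtain j where "j \<le> p" "c j = 1"
    using assms by blast
  then have "(GREATEST j. j \<le> p \<and> c j = 1) \<le> p \<and> c (GREATEST j. j \<le> p \<and> c j = 1) = 1"
    using GreatestI_nat[of "\<lambda>j. j \<le> p \<and> c j = 1" j p] by blast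
  then show "last_marked c p \<le> p" "c (last_marked c p) = 1"
    using assms by (simp_all add: last_marked_def)
  show "\<And>j. j \<le> p \<Longrightarrow> c j = 1 \<Longrightarrow> j \<le> last_marked c p"
    using assms Greatest_le_nat[of "\<lambda>j. j \<le> p \<and> c j = 1" _ p] by (simp add: last_marked_def)
qed

lemma last_marked_le: "last_marked c p \<le> p"
  using last_marked_props(1)[of p c] by (auto simp: last_marked_def)

text \<open>The starter position 0 serves as the default target of both searches below; the bonus it
  receives in the scores is large enough to beat unmarked positions but not marked ones.\<close>

lemma last_marked_score_max:
  assumes "\<And>q. c q = 0 \<or> c q = 1" "c 0 = 0" "q \<noteq> last_marked c p"
  shows "- inv_succ q + 3 * c q + 2 * (if q = 0 then 1 else 0) - 10 * (if q > p then 1 else 0)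
    < - inv_succ (last_marked c p) + 3 * c (last_marked c p) + 2 * (if last_marked c p = 0 then 1 else 0)
      - 10 * (if last_marked c p > p then 1 else 0)"
proof (cases "\<exists>j\<le>p. c j = 1")
  case True
  note J = last_marked_props[OF True]
  have "last_marked c p \<noteq> 0"
    using J(2) assms(2) by (metis zero_neq_one)
  moreover have "q \<le> p \<Longrightarrow> c q = 1 \<Longrightarrow> q < last_marked c p"
    using J(3)[of q] assms(3) by simp
  ultimately show ?thesis
    using J(1,2) assms(1)[of q] assms(2) inv_succ_strict_anti[of q "last_marked c p"] inv_succ_pos[of q]
      inv_succ_le_one[of q] inv_succ_le_one[of "last_marked c p"]
    by (cases "q > p"; cases "q = 0") auto
next
  case False
  then have "last_marked c p = 0"
    unfolding last_marked_def by (simp only: if_False)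
  moreover have "q \<le> p \<Longrightarrow> c q = 0"
    using False assms(1)[of q] by auto
  ultimately show ?thesis
    using assms(1)[of q] assms(2,3) inv_succ_pos[of q] by (cases "q > p") auto
qed

definition next_marked :: "(nat \<Rightarrow> real) \<Rightarrow> nat \<Rightarrow> nat \<Rightarrow> nat" where
  "next_marked b n p =
    (if p \<noteq> 0 \<and> (\<exists>j. p < j \<and> j < n \<and> b j = 1) then LEAST j. p < j \<and> j < n \<and> b j = 1 else 0)"

lemma next_marked_props:
  assumes "\<exists>j. p < j \<and> j < n \<and> b j = 1" "p \<noteq> 0"
  shows "p < next_marked b n p" "next_marked b n p < n" "b (next_marked b n p) = 1"
    "\<And>j. p < j \<Longrightarrow> j < n \<Longrightarrow> b j = 1 \<Longrightarrow> next_marked b n p \<le> j"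
proof -
  have K: "next_marked b n p = (LEAST j. p < j \<and> j < n \<and> b j = 1)"
    using assms by (simp add: next_marked_def)
  obtain j where "p < j \<and> j < n \<and> b j = 1"
    using assms by blast
  then have "p < next_marked b n p \<and> next_marked b n p < n \<and> b (next_marked b n p) = 1"
    unfolding K by (rule LeastI)
  then show "p < next_marked b n p" "next_marked b n p < n" "b (next_marked b n p) = 1"
    by auto
  show "\<And>j. p < j \<Longrightarrow> j < n \<Longrightarrow> b j = 1 \<Longrightarrow> next_marked b n p \<le> j"
    unfolding K by (rule Least_le) auto
qed

lemma next_marked_less: "0 < n \<Longrightarrow> next_marked b n p < n"
  using next_marked_props(2)[of p n b] by (auto simp: next_marked_def)

lemma next_marked_score_max:
  assumes "\<And>q. b q = 0 \<or> b q = 1" "b 0 = 0" "q < n" "q \<noteq> next_marked b n p"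
  shows "inv_succ q + 3 * b q + 12 * (if q = 0 then 1 else 0)
      + 100 * ((if p = 0 then 1 else 0) * (if q = 0 then 1 else 0)) + 10 * (if q > p then 1 else 0)
    < inv_succ (next_marked b n p) + 3 * b (next_marked b n p) + 12 * (if next_marked b n p = 0 then 1 else 0)
      + 100 * ((if p = 0 then 1 else 0) * (if next_marked b n p = 0 then 1 else 0))
      + 10 * (if next_marked b n p > p then 1 else 0)"
proof (cases "p \<noteq> 0 \<and> (\<exists>j. p < j \<and> j < n \<and> b j = 1)")
  case True
  note K = next_marked_props[OF conjunct2[OF True] conjunct1[OF True]]
  have "p < q \<Longrightarrow> b q = 1 \<Longrightarrow> next_marked b n p < q"
    using K(4)[of q] assms(3,4) by force
  then show ?thesis
    using True K(1,3) assms(1)[of q] assms(2) inv_succ_strict_anti[of "next_marked b n p" q]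
      inv_succ_le_one[of q] inv_succ_pos[of "next_marked b n p"]
    by (cases "q > p"; cases "q = 0") auto
next
  case False
  then have "next_marked b n p = 0"
    by (auto simp: next_marked_def)
  moreover have "p \<noteq> 0 \<Longrightarrow> p < q \<Longrightarrow> b q = 0"
    using False assms(1)[of q] assms(3) by auto
  ultimately show ?thesis
    using assms(1)[of q] assms(2,4) inv_succ_le_one[of q] by (cases "q > p"; cases "p = 0") auto
qed

lemma argmax_set_eq_singleton:
  assumes "q0 < length X" "\<And>q. q < length X \<Longrightarrow> q \<noteq> q0 \<Longrightarrow> score h X p q < score h X p q0"
  shows "argmax_set h X p = {q0}"
proof -
  have "\<And>q. q < length X \<Longrightarrow> score h X p q \<le> score h X p q0"
    using assms(2) by (metis order.order_iff_strict order_refl)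
  then show ?thesis
    using assms unfolding argmax_set_def by (auto simp: not_le[symmetric])
qed

lemma length_attn_head [simp]: "length (attn_head h X p) = length (WV h)"
  by (simp add: attn_head_def)

subsection \<open>Feed-forward layers computing a linear map\<close>

definition kronecker :: "nat \<Rightarrow> nat \<Rightarrow> real" where
  "kronecker i j = (if i = j then 1 else 0)"

lemma sum_kronecker [simp]: "i < m \<Longrightarrow> (\<Sum>j<m. kronecker i j * f j) = f i"
  by (simp add: kronecker_def if_distrib[of "\<lambda>x. x * _"] cong: if_cong)

lemma sum_kronecker' [simp]: "i < m \<Longrightarrow> (\<Sum>j<m. kronecker j i * f j) = f i"
  by (simp add: kronecker_def if_distrib[of "\<lambda>x. x * _"] cong: if_cong)

text \<open>A linear map \<open>M\<close> is realised by a residual ReLU layer through \<open>x = ReLU x - ReLU (-x)\<close>.\<close>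

definition relu_split_W1 :: "nat \<Rightarrow> mat" where
  "relu_split_W1 m = mat_of (4 * m) m (\<lambda>r j. kronecker r j - kronecker r (m + j))"

definition relu_split_W2 :: "nat \<Rightarrow> (nat \<Rightarrow> nat \<Rightarrow> real) \<Rightarrow> mat" where
  "relu_split_W2 m M = mat_of m (4 * m) (\<lambda>i r.
     if r < m then M i r - kronecker i r else if r < 2 * m then kronecker i (r - m) - M i (r - m) else 0)"

lemma sum_lessThan_4_split:
  "(\<Sum>r<4*m. g r) = (\<Sum>j<m. g j) + (\<Sum>j<m. g (m + j)) + (\<Sum>r\<in>{2*m..<4*m}. g (r::nat))"
proof -
  have "(\<Sum>r<4*m. g r) = (\<Sum>r\<in>{0..<m}. g r) + (\<Sum>r\<in>{m..<2*m}. g r) + (\<Sum>r\<in>{2*m..<4*m}. g r)"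
    by (simp add: atLeast0LessThan[symmetric] sum.atLeastLessThan_concat)
  moreover have "(\<Sum>r\<in>{m..<2*m}. g r) = (\<Sum>j<m. g (m + j))"
    using sum.shift_bounds_nat_ivl[of g 0 m m] by (simp add: atLeast0LessThan add.commute mult_2)
  ultimately show ?thesis
    by (simp add: atLeast0LessThan)
qed

lemma mv_relu_split_W1:
  assumes "length x = m"
  shows "mv (relu_split_W1 m) x = vec_of (4 * m) (\<lambda>r. if r < m then x ! r else if r < 2 * m then - x ! (r - m) else 0)"
proof -
  have "mv (relu_split_W1 m) x = vec_of (4 * m) (\<lambda>r. \<Sum>j<m. (kronecker r j - kronecker r (m + j)) * x ! j)"
    using assms by (simp add: relu_split_W1_def mv_mat_of)
  also have "\<dots> = vec_of (4 * m) (\<lambda>r. if r < m then x ! r else if r < 2 * m then - x ! (r - m) else 0)"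
  proof (rule vec_of_cong)
    fix r
    have "(\<Sum>j<m. (kronecker r j - kronecker r (m + j)) * x ! j)
      = (\<Sum>j<m. kronecker j r * x ! j) - (\<Sum>j<m. kronecker (m + j) r * x ! j)"
      by (simp add: kronecker_def left_diff_distrib sum_subtractf eq_commute)
    moreover have "(\<Sum>j<m. kronecker (m + j) r * x ! j) = (if m \<le> r \<and> r < 2 * m then x ! (r - m) else 0)"
    proof (cases "m \<le> r \<and> r < 2 * m")
      case True
      then have "(\<Sum>j<m. kronecker (m + j) r * x ! j) = (\<Sum>j<m. kronecker (r - m) j * x ! j)"
        by (intro sum.cong) (auto simp: kronecker_def)
      moreover have "r - m < m"
        using True by linarith
      ultimately show ?thesis
        using True by simp
    qed (auto simp: kronecker_def intro!: sum.neutral)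
    moreover have "(\<Sum>j<m. kronecker j r * x ! j) = (if r < m then x ! r else 0)"
      by (cases "r < m") (simp, auto simp: kronecker_def intro!: sum.neutral)
    ultimately show "(\<Sum>j<m. (kronecker r j - kronecker r (m + j)) * x ! j)
      = (if r < m then x ! r else if r < 2 * m then - x ! (r - m) else 0)"
      by simp
  qed
  finally show ?thesis .
qed

lemma residual_relu_split_ffn:
  assumes "length x = m" "W1 l = relu_split_W1 m" "B1 l = replicate (4 * m) 0"
    "W2 l = relu_split_W2 m M" "B2 l = replicate m 0"
  shows "vadd x (f_ffn l x) = vec_of m (\<lambda>i. \<Sum>j<m. M i j * x ! j)"
proof -
  define h where "h r = (if r < m then x ! r else if r < 2 * m then - x ! (r - m) else 0)" for r
  have zero: "\<And>k. replicate k (0::real) = vec_of k (\<lambda>_. 0)"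
    by (simp add: vec_of_def map_replicate_const)
  have hidden: "map (max 0) (vadd (mv (W1 l) x) (B1 l)) = vec_of (4 * m) (\<lambda>r. max 0 (h r))"
    using assms(1,2,3) unfolding h_def by (simp add: mv_relu_split_W1 zero vadd_vec_of) (simp add: vec_of_def)
  have "(\<Sum>r<4*m. (if r < m then M i r - kronecker i r else if r < 2 * m then kronecker i (r - m) - M i (r - m) else 0)
      * max 0 (h r)) = (\<Sum>j<m. (M i j - kronecker i j) * x ! j)" for i
  proof -
    have "(\<Sum>r\<in>{2*m..<4*m}. (if r < m then M i r - kronecker i r
        else if r < 2 * m then kronecker i (r - m) - M i (r - m) else 0) * max 0 (h r)) = 0"
      by (rule sum.neutral) auto
    moreover have "(M i j - kronecker i j) * max 0 (x ! j) + (kronecker i j - M i j) * max 0 (- x ! j)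
        = (M i j - kronecker i j) * x ! j" for j
      by (simp add: max_def algebra_simps)
    ultimately show ?thesis
      unfolding sum_lessThan_4_split h_def by (simp add: sum.distrib[symmetric])
  qed
  then have "f_ffn l x = vec_of m (\<lambda>i. \<Sum>j<m. (M i j - kronecker i j) * x ! j)"
    using assms(4,5) by (simp add: f_ffn_def hidden relu_split_W2_def mv_mat_of zero vadd_vec_of)
  then show ?thesis
    using vadd_vec_of[of m "\<lambda>i. x ! i"] assms(1)
    by (simp add: vec_of_nth left_diff_distrib sum_subtractf cong: vec_of_cong)
qed

locale block_layout =
  fixes d :: nat
begin

definition D :: nat where
  "D = Suc d"

definition dm :: nat where
  "dm = 11 * D"

lemma D_pos [simp]: "0 < D"
  by (simp add: D_def)

lemma D_neq_0 [simp]: "D \<noteq> 0"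
  by (simp add: D_def)

definition rank2_head :: "(nat \<Rightarrow> real) \<Rightarrow> (nat \<Rightarrow> real) \<Rightarrow> (nat \<Rightarrow> real) \<Rightarrow> (nat \<Rightarrow> real)
    \<Rightarrow> (nat \<Rightarrow> nat \<Rightarrow> real) \<Rightarrow> real \<times> real \<Rightarrow> head" where
  "rank2_head \<alpha> \<beta> \<kappa> \<mu> V \<Lambda> =
    \<lparr>WQ = mat_of dm dm (\<lambda>r j. if r = 0 then \<alpha> j else if r = 1 then \<beta> j else 0),
     WK = mat_of dm dm (\<lambda>r j. if r = 0 then \<kappa> j else if r = 1 then \<mu> j else 0),
     WV = mat_of dm dm V, lam = \<Lambda>\<rparr>"

definition zero_head :: head where
  "zero_head = rank2_head (\<lambda>_. 0) (\<lambda>_. 0) (\<lambda>_. 0) (\<lambda>_. 0) (\<lambda>_ _. 0) (0, 0)"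

text \<open>Only the first two heads are ever used; the nine idle ones make the number of heads equal
  to the width factor 11, as the class \<open>TF(C (d + 1), C, C)\<close> requires.\<close>

definition two_head_layer :: "head \<Rightarrow> head \<Rightarrow> (nat \<Rightarrow> nat \<Rightarrow> real) \<Rightarrow> layer" where
  "two_head_layer h0 h1 M =
    \<lparr>heads = [h0, h1] @ replicate 9 zero_head,
     WO = mat_of dm (11 * dm) (\<lambda>r j. kronecker r j + kronecker (dm + r) j),
     W1 = relu_split_W1 dm, B1 = replicate (4 * dm) 0, W2 = relu_split_W2 dm M, B2 = replicate dm 0\<rparr>"

lemma wf_rank2_head: "wf_head dm (rank2_head \<alpha> \<beta> \<kappa> \<mu> V \<Lambda>)"
  by (simp add: wf_head_def rank2_head_def)

lemma wf_two_head_layer: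
  "wf_head dm h0 \<Longrightarrow> wf_head dm h1 \<Longrightarrow> wf_layer dm 11 (two_head_layer h0 h1 M)"
  by (auto simp: wf_layer_def two_head_layer_def zero_head_def wf_rank2_head
      relu_split_W1_def relu_split_W2_def)

lemma length_WV_rank2_head [simp]: "length (WV (rank2_head \<alpha> \<beta> \<kappa> \<mu> V \<Lambda>)) = dm"
  by (simp add: rank2_head_def)

lemma score_rank2_head:
  assumes "length (X ! p) = dm" "length (X ! q) = dm"
  shows "score (rank2_head \<alpha> \<beta> \<kappa> \<mu> V \<Lambda>) X p q =
     (\<Sum>j<dm. \<alpha> j * X!p!j) * (\<Sum>j<dm. \<kappa> j * X!q!j) + (\<Sum>j<dm. \<beta> j * X!p!j) * (\<Sum>j<dm. \<mu> j * X!q!j)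
     + fst \<Lambda> * (real q - real p) + snd \<Lambda> * (if q > p then 1 else 0)"
proof -
  let ?f = "\<lambda>r::nat. (\<Sum>j<dm. (if r = 0 then \<alpha> j else if r = 1 then \<beta> j else 0) * X!p!j) *
                (\<Sum>j<dm. (if r = 0 then \<kappa> j else if r = 1 then \<mu> j else 0) * X!q!j)"
  have "(\<Sum>r<dm. ?f r) = (\<Sum>r\<in>{0, 1}. ?f r)"
    by (intro sum.mono_neutral_right) (auto simp: dm_def D_def)
  then show ?thesis
    using assms by (simp add: score_def rank2_head_def mv_mat_of dot_vec_of)
qed

lemma attn_head_rank2_head:
  assumes "\<And>q. q < length X \<Longrightarrow> length (X ! q) = dm"
  shows "attn_head (rank2_head \<alpha> \<beta> \<kappa> \<mu> V \<Lambda>) X p = vec_of dm (\<lambda>r.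
     (\<Sum>q\<in>argmax_set (rank2_head \<alpha> \<beta> \<kappa> \<mu> V \<Lambda>) X p. \<Sum>j<dm. V r j * X!q!j)
       / real (card (argmax_set (rank2_head \<alpha> \<beta> \<kappa> \<mu> V \<Lambda>) X p)))"
proof -
  have "\<And>q. q \<in> argmax_set (rank2_head \<alpha> \<beta> \<kappa> \<mu> V \<Lambda>) X p \<Longrightarrow> length (X ! q) = dm"
    using assms by (auto simp: argmax_set_def)
  then show ?thesis
    unfolding attn_head_def vec_of_def length_WV_rank2_head
    by (intro map_cong refl arg_cong2[where f="(/)"] sum.cong) (simp add: rank2_head_def mv_mat_of)
qed

lemma length_WV_zero_head [simp]: "length (WV zero_head) = dm"
  by (simp add: zero_head_def)

lemma attn_head_zero_head:
  assumes "\<And>q. q < length X \<Longrightarrow> length (X ! q) = dm"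
  shows "attn_head zero_head X p = vec_of dm (\<lambda>_. 0)"
  unfolding zero_head_def using assms by (simp add: attn_head_rank2_head)

lemma f_attn_two_head_layer:
  assumes "\<And>q. q < length X \<Longrightarrow> length (X ! q) = dm"
    and "length (WV h0) = dm" "length (WV h1) = dm"
  shows "f_attn (two_head_layer h0 h1 M) X p = vec_of dm (\<lambda>r. attn_head h0 X p ! r + attn_head h1 X p ! r)"
proof -
  let ?c = "concat (map (\<lambda>h. attn_head h X p) ([h0, h1] @ replicate 9 zero_head))"
  have "length ?c = 11 * dm"
    using assms by (simp add: zero_head_def length_concat sum_list_replicate)
  then have "f_attn (two_head_layer h0 h1 M) X p
      = vec_of dm (\<lambda>r. \<Sum>j<11 * dm. (kronecker r j + kronecker (dm + r) j) * ?c ! j)"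
    by (simp add: f_attn_def two_head_layer_def mv_mat_of)
  also have "\<dots> = vec_of dm (\<lambda>r. ?c ! r + ?c ! (dm + r))"
    by (intro vec_of_cong) (simp add: distrib_right sum.distrib)
  also have "\<dots> = vec_of dm (\<lambda>r. attn_head h0 X p ! r + attn_head h1 X p ! r)"
    using assms by (intro vec_of_cong) (simp add: nth_append)
  finally show ?thesis .
qed

lemma residual_ffn_two_head_layer:
  "length x = dm \<Longrightarrow> vadd x (f_ffn (two_head_layer h0 h1 M) x) = vec_of dm (\<lambda>i. \<Sum>j<dm. M i j * x ! j)"
  by (rule residual_relu_split_ffn) (simp_all add: two_head_layer_def)

subsection \<open>States and the layers that copy along a single attention target\<close>

text \<open>The state of a position consists of six blocks of width \<open>D\<close>, each holding a zero-padded
  token encoding, followed by five scalar slots: the flag of the starter token, the constant 1,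
  the weight \<open>1/(p + 1)\<close> of the position \<open>p\<close>, the weight of its cyclic successor, and the flag
  telling whether that successor is the starter token.\<close>

definition block :: "nat \<Rightarrow> (nat \<Rightarrow> real) \<Rightarrow> nat \<Rightarrow> real" where
  "block b f k = (if b * D \<le> k \<and> k < b * D + D then f (k - b * D) else 0)"

definition slot :: "nat \<Rightarrow> real \<Rightarrow> nat \<Rightarrow> real" where
  "slot c x k = (if k = c then x else 0)"

definition c_start :: "nat" where
  "c_start = 6 * D"

definition c_one :: "nat" where
  "c_one = 7 * D"

definition c_pos :: "nat" where
  "c_pos = 8 * D"

definition c_next :: "nat" where
  "c_next = 9 * D"

definition c_next_start :: "nat" where
  "c_next_start = 10 * D"

lemmas slot_defs = c_start_def c_one_def c_pos_def c_next_def c_next_start_def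

lemma slots_less_dm [simp]: "c_start < dm" "c_one < dm" "c_pos < dm" "c_next < dm" "c_next_start < dm"
  "D < dm" "0 < dm"
  by (simp_all add: slot_defs dm_def)

definition layout :: "(nat \<Rightarrow> real) \<Rightarrow> (nat \<Rightarrow> real) \<Rightarrow> (nat \<Rightarrow> real) \<Rightarrow> (nat \<Rightarrow> real)
    \<Rightarrow> (nat \<Rightarrow> real) \<Rightarrow> (nat \<Rightarrow> real) \<Rightarrow> real \<Rightarrow> real \<Rightarrow> real \<Rightarrow> real \<Rightarrow> real \<Rightarrow> nat \<Rightarrow> real" where
  "layout v0 v1 v2 v3 v4 v5 s1 s2 s3 s4 s5 k =
     block 0 v0 k + block 1 v1 k + block 2 v2 k + block 3 v3 k + block 4 v4 k + block 5 v5 k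
     + slot c_start s1 k + slot c_one s2 k + slot c_pos s3 k + slot c_next s4 k + slot c_next_start s5 k"

lemma layout_block:
  assumes "t < D"
  shows "layout v0 v1 v2 v3 v4 v5 s1 s2 s3 s4 s5 t = v0 t"
    "layout v0 v1 v2 v3 v4 v5 s1 s2 s3 s4 s5 (D + t) = v1 t"
    "layout v0 v1 v2 v3 v4 v5 s1 s2 s3 s4 s5 (2 * D + t) = v2 t"
    "layout v0 v1 v2 v3 v4 v5 s1 s2 s3 s4 s5 (3 * D + t) = v3 t"
    "layout v0 v1 v2 v3 v4 v5 s1 s2 s3 s4 s5 (4 * D + t) = v4 t"
    "layout v0 v1 v2 v3 v4 v5 s1 s2 s3 s4 s5 (5 * D + t) = v5 t"
  using assms by (simp_all add: layout_def block_def slot_def slot_defs)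

lemma layout_slot [simp]:
  "layout v0 v1 v2 v3 v4 v5 s1 s2 s3 s4 s5 c_start = s1"
  "layout v0 v1 v2 v3 v4 v5 s1 s2 s3 s4 s5 c_one = s2"
  "layout v0 v1 v2 v3 v4 v5 s1 s2 s3 s4 s5 c_pos = s3"
  "layout v0 v1 v2 v3 v4 v5 s1 s2 s3 s4 s5 c_next = s4"
  "layout v0 v1 v2 v3 v4 v5 s1 s2 s3 s4 s5 c_next_start = s5"
  by (simp_all add: layout_def block_def slot_def slot_defs)

lemma layout_0 [simp]: "layout v0 v1 v2 v3 v4 v5 s1 s2 s3 s4 s5 0 = v0 0"
  using layout_block(1)[of 0] by simp

lemma layout_D [simp]: "layout v0 v1 v2 v3 v4 v5 s1 s2 s3 s4 s5 D = v1 0"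
  using layout_block(2)[of 0] by simp

lemma block_cong: "(\<And>t. t < D \<Longrightarrow> f t = g t) \<Longrightarrow> block b f = block b g"
  by (auto simp: block_def fun_eq_iff)

lemma block_layout_blocks [simp]:
  "block b (\<lambda>t. layout v0 v1 v2 v3 v4 v5 s1 s2 s3 s4 s5 t) = block b v0"
  "block b (\<lambda>t. layout v0 v1 v2 v3 v4 v5 s1 s2 s3 s4 s5 (D + t)) = block b v1"
  "block b (\<lambda>t. layout v0 v1 v2 v3 v4 v5 s1 s2 s3 s4 s5 (2 * D + t)) = block b v2"
  "block b (\<lambda>t. layout v0 v1 v2 v3 v4 v5 s1 s2 s3 s4 s5 (3 * D + t)) = block b v3"
  "block b (\<lambda>t. layout v0 v1 v2 v3 v4 v5 s1 s2 s3 s4 s5 (4 * D + t)) = block b v4"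
  "block b (\<lambda>t. layout v0 v1 v2 v3 v4 v5 s1 s2 s3 s4 s5 (5 * D + t)) = block b v5"
  by (auto intro!: block_cong simp: layout_block)

lemma block_zero [simp]: "block b (\<lambda>_. 0) = (\<lambda>_. 0)"
  by (auto simp: block_def fun_eq_iff)

lemma slot_zero [simp]: "slot c 0 = (\<lambda>_. 0)"
  by (auto simp: slot_def fun_eq_iff)

abbreviation empty_block :: "nat \<Rightarrow> real" where
  "empty_block \<equiv> \<lambda>_. 0"

definition copy_block :: "nat \<Rightarrow> nat \<Rightarrow> nat \<Rightarrow> nat \<Rightarrow> real" where
  "copy_block b b' r j = (if b' * D \<le> r \<and> r < b' * D + D \<and> j = r - b' * D + b * D then 1 else 0)"

definition copy_slot :: "nat \<Rightarrow> nat \<Rightarrow> nat \<Rightarrow> nat \<Rightarrow> real" where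
  "copy_slot c c' r j = (if r = c' \<and> j = c then 1 else 0)"

lemma sum_scaled_kronecker [simp]: "i < dm \<Longrightarrow> (\<Sum>j<dm. (u * kronecker i j) * f j) = u * f i"
  by (simp add: mult.assoc sum_distrib_left[symmetric])

lemma sum_copy_slot [simp]: "c < dm \<Longrightarrow> (\<Sum>j<dm. copy_slot c c' r j * f j) = slot c' (f c) r"
proof -
  assume "c < dm"
  have "(\<Sum>j<dm. copy_slot c c' r j * f j) = (\<Sum>j<dm. (slot c' 1 r * kronecker c j) * f j)"
    by (intro sum.cong) (auto simp: copy_slot_def slot_def kronecker_def)
  then show ?thesis
    using \<open>c < dm\<close> by (simp add: slot_def)
qed

lemma sum_copy_block [simp]:
  assumes "b < 11"
  shows "(\<Sum>j<dm. copy_block b b' r j * f j) = block b' (\<lambda>t. f (b * D + t)) r"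
proof (cases "b' * D \<le> r \<and> r < b' * D + D")
  case True
  have "b * D \<le> 10 * D"
    using assms by (intro mult_le_mono1) simp
  then have "r - b' * D + b * D < dm"
    using True unfolding dm_def by linarith
  moreover have "(\<Sum>j<dm. copy_block b b' r j * f j) = (\<Sum>j<dm. kronecker (r - b' * D + b * D) j * f j)"
    using True by (intro sum.cong) (auto simp: copy_block_def kronecker_def)
  ultimately show ?thesis
    using True by (simp add: block_def add.commute)
qed (auto simp: copy_block_def block_def intro!: sum.neutral)

abbreviation states :: "nat \<Rightarrow> (nat \<Rightarrow> nat \<Rightarrow> real) \<Rightarrow> vec list" where
  "states n st \<equiv> map (\<lambda>i. vec_of dm (st i)) [0..<n]"

lemma sum_states: "q < n \<Longrightarrow> (\<Sum>j<dm. f j * states n st ! q ! j) = (\<Sum>j<dm. f j * st q j)"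
  by (rule sum.cong) auto

lemma score_states:
  assumes "p < n" "q < n"
  shows "score (rank2_head \<alpha> \<beta> \<kappa> \<mu> V \<Lambda>) (states n st) p q =
     (\<Sum>j<dm. \<alpha> j * st p j) * (\<Sum>j<dm. \<kappa> j * st q j) + (\<Sum>j<dm. \<beta> j * st p j) * (\<Sum>j<dm. \<mu> j * st q j)
     + fst \<Lambda> * (real q - real p) + snd \<Lambda> * (if q > p then 1 else 0)"
  using assms by (simp add: score_rank2_head sum_states)

lemma attn_head_states_singleton:
  assumes "argmax_set (rank2_head \<alpha> \<beta> \<kappa> \<mu> V \<Lambda>) (states n st) p = {q0}" "q0 < n"
  shows "attn_head (rank2_head \<alpha> \<beta> \<kappa> \<mu> V \<Lambda>) (states n st) p = vec_of dm (\<lambda>r. \<Sum>j<dm. V r j * st q0 j)"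
proof -
  have "attn_head (rank2_head \<alpha> \<beta> \<kappa> \<mu> V \<Lambda>) (states n st) p
      = vec_of dm (\<lambda>r. (\<Sum>q\<in>{q0}. \<Sum>j<dm. V r j * states n st ! q ! j) / real (card {q0}))"
    using attn_head_rank2_head[of "states n st"] assms(1) by simp
  then show ?thesis
    using assms(2) by (simp add: sum_states)
qed

lemma apply_layer_states:
  assumes "\<And>p. p < n \<Longrightarrow> f_attn (two_head_layer h0 h1 M) (states n st) p = vec_of dm (att p)"
  shows "apply_layer (two_head_layer h0 h1 M) (states n st)
    = states n (\<lambda>i k. \<Sum>j<dm. M k j * (st i j + att i j))"
  unfolding apply_layer_def Let_def
  by (simp add: assms vadd_vec_of residual_ffn_two_head_layer)

lemma apply_layer_single_target:
  assumes "h = rank2_head \<alpha> \<beta> \<kappa> \<mu> V \<Lambda>"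
    and "\<And>p. p < n \<Longrightarrow> argmax_set h (states n st) p = {tg p}"
    and "\<And>p. p < n \<Longrightarrow> tg p < n"
    and "\<And>i k. i < n \<Longrightarrow> k < dm \<Longrightarrow> (\<Sum>j<dm. M k j * (st i j + (\<Sum>l<dm. V j l * st (tg i) l))) = st' i k"
  shows "apply_layer (two_head_layer h zero_head M) (states n st) = states n st'"
proof -
  have "f_attn (two_head_layer h zero_head M) (states n st) p = vec_of dm (\<lambda>r. \<Sum>j<dm. V r j * st (tg p) j)"
    if "p < n" for p
  proof -
    have "f_attn (two_head_layer h zero_head M) (states n st) p
      = vec_of dm (\<lambda>r. attn_head h (states n st) p ! r + attn_head zero_head (states n st) p ! r)"
      using assms(1) by (intro f_attn_two_head_layer) simp_all
    then show ?thesis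
      using attn_head_states_singleton[OF assms(2)[OF that, unfolded assms(1)] assms(3)[OF that]]
        attn_head_zero_head[of "states n st" p] assms(1)
      by (simp cong: vec_of_cong)
  qed
  then show ?thesis
    using assms(4) by (simp add: apply_layer_states cong: vec_of_cong)
qed

definition head_uniform :: "head" where
  "head_uniform = rank2_head (\<lambda>_. 0) (\<lambda>_. 0) (\<lambda>_. 0) (\<lambda>_. 0) (copy_slot c_start c_pos) (0, -1)"

definition head_first :: "head" where
  "head_first = rank2_head (\<lambda>_. 0) (\<lambda>_. 0) (\<lambda>_. 0) (\<lambda>_. 0) (copy_slot c_start c_one) (-1, 0)"

definition head_successor :: "head" where
  "head_successor = rank2_head (kronecker c_one) (\<lambda>_. 0) (kronecker c_pos) (\<lambda>_. 0)
    (\<lambda>r j. copy_slot c_pos c_next r j + copy_slot c_start c_next_start r j) (0, 2)"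

definition head_prev :: "(nat \<Rightarrow> nat \<Rightarrow> real) \<Rightarrow> head" where
  "head_prev V = rank2_head (\<lambda>j. 4 * kronecker c_pos j) (\<lambda>j. 2 * kronecker c_one j + kronecker c_pos j)
    (kronecker c_pos) (\<lambda>j. kronecker c_next j - kronecker c_pos j - 2 * kronecker c_next_start j) V (0, 0)"

text \<open>Coordinates \<open>D\<close> and \<open>0\<close> are the \<open>Some\<close>-flags of the tokens in blocks 1 and 0.\<close>

definition head_last_marked :: "(nat \<Rightarrow> nat \<Rightarrow> real) \<Rightarrow> head" where
  "head_last_marked V = rank2_head (kronecker c_one) (\<lambda>_. 0)
    (\<lambda>j. 3 * kronecker D j + 2 * kronecker c_start j - kronecker c_pos j) (\<lambda>_. 0) V (0, -10)"

definition head_next_marked :: "(nat \<Rightarrow> nat \<Rightarrow> real) \<Rightarrow> head" where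
  "head_next_marked V = rank2_head (kronecker c_one) (kronecker c_start)
    (\<lambda>j. kronecker c_pos j + 3 * kronecker 0 j + 12 * kronecker c_start j) (\<lambda>j. 100 * kronecker c_start j) V (0, 10)"

definition output_map :: "nat \<Rightarrow> nat \<Rightarrow> real" where
  "output_map r j = copy_block 4 0 r j + copy_block 5 1 r j"

definition layer_position :: "layer" where
  "layer_position = two_head_layer head_uniform head_first kronecker"

definition layer_successor :: "layer" where
  "layer_successor = two_head_layer head_successor zero_head kronecker"

definition left_layer3 :: "layer" where
  "left_layer3 = two_head_layer (head_prev (copy_block 0 1)) zero_head kronecker"

definition left_layer4 :: "layer" where
  "left_layer4 = two_head_layer (head_last_marked (copy_block 1 2)) zero_head kronecker"

definition left_layer5 :: "layer" where
  "left_layer5 = two_head_layer (head_prev (copy_block 2 3)) zero_head kronecker"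

definition left_layer6 :: "layer" where
  "left_layer6 =
    two_head_layer (head_last_marked (\<lambda>r j. copy_block 1 4 r j + copy_block 3 5 r j)) zero_head output_map"
definition right_layer2 :: "layer" where
  "right_layer2 = two_head_layer (head_next_marked (copy_block 0 2)) zero_head kronecker"

definition right_layer3 :: "layer" where
  "right_layer3 =
    two_head_layer (head_next_marked (\<lambda>r j. copy_block 0 4 r j + copy_block 2 5 r j)) zero_head output_map"
definition zero_layer :: "layer" where
  "zero_layer = two_head_layer zero_head zero_head kronecker"

definition tf_left :: "transformer" where
  "tf_left = \<lparr>start = vec_of dm (slot c_start 1), layers =
    [layer_position, layer_successor, left_layer3, left_layer4, left_layer5, left_layer6] @ replicate 5 zero_layer\<rparr>"

definition tf_right :: "transformer" where
  "tf_right = \<lparr>start = vec_of dm (slot c_start 1), layers =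
    [layer_position, right_layer2, right_layer3] @ replicate 8 zero_layer\<rparr>"

lemma tf_left_in_TF: "tf_left \<in> TF dm 11 11"
  by (auto simp: TF_def tf_left_def layer_position_def layer_successor_def left_layer3_def left_layer4_def
      left_layer5_def left_layer6_def zero_layer_def head_uniform_def head_first_def head_successor_def
      head_prev_def head_last_marked_def zero_head_def intro!: wf_two_head_layer wf_rank2_head)

lemma tf_right_in_TF: "tf_right \<in> TF dm 11 11"
  by (auto simp: TF_def tf_right_def layer_position_def right_layer2_def right_layer3_def zero_layer_def
      head_uniform_def head_first_def head_next_marked_def zero_head_def intro!: wf_two_head_layer wf_rank2_head)

lemma apply_zero_layers: "(apply_layer zero_layer ^^ k) (states n st) = states n st"
proof -
  have "f_attn zero_layer (states n st) p = vec_of dm (\<lambda>_. 0)" for p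
    unfolding zero_layer_def
    using attn_head_zero_head[of "states n st" p]
    by (subst f_attn_two_head_layer) (simp_all cong: vec_of_cong)
  then have "apply_layer zero_layer (states n st) = states n st"
    unfolding zero_layer_def by (simp add: apply_layer_states cong: vec_of_cong)
  then show ?thesis
    by (induction k) simp_all
qed

lemma argmax_head_uniform:
  assumes "p < n"
  shows "argmax_set head_uniform (states n st) p = {..p}"
proof -
  have "\<And>q. q < n \<Longrightarrow> score head_uniform (states n st) p q = (if q > p then -1 else 0)"
    using assms by (simp add: head_uniform_def score_states)
  then show ?thesis
    using assms by (force simp: argmax_set_def split: if_splits)
qed

lemma apply_layer_position:
  assumes "\<And>i. st i c_start = (if i = 0 then 1 else 0)"
  shows "apply_layer layer_position (states n st)
    = states n (\<lambda>i k. st i k + slot c_pos (inv_succ i) k + slot c_one 1 k)"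
proof -
  have "f_attn layer_position (states n st) p = vec_of dm (\<lambda>r. slot c_pos (inv_succ p) r + slot c_one 1 r)"
    if "p < n" for p
  proof -
    have sum_start: "(\<Sum>q\<in>{..p}. slot c_pos (st q c_start) r) = slot c_pos 1 r" for r
      using assms by (simp add: slot_def)
    then have "attn_head head_uniform (states n st) p
        = vec_of dm (\<lambda>r. (\<Sum>q\<in>{..p}. slot c_pos (st q c_start) r) / real (card {..p}))"
      using that argmax_head_uniform[OF that, of st] unfolding head_uniform_def
      by (subst attn_head_rank2_head) (simp_all add: sum_states cong: vec_of_cong)
    also have "\<dots> = vec_of dm (\<lambda>r. slot c_pos (inv_succ p) r)"
      by (rule vec_of_cong) (simp only: sum_start, simp add: slot_def inv_succ_def)
    finally have uniform: "attn_head head_uniform (states n st) p = vec_of dm (\<lambda>r. slot c_pos (inv_succ p) r)" .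
    have "argmax_set head_first (states n st) p = {0}"
      using that by (intro argmax_set_eq_singleton) (auto simp: head_first_def score_states)
    then have "attn_head head_first (states n st) p = vec_of dm (\<lambda>r. slot c_one 1 r)"
      unfolding head_first_def using assms that by (simp add: attn_head_states_singleton)
    then show ?thesis
      unfolding layer_position_def using uniform
      by (subst f_attn_two_head_layer) (simp_all add: head_uniform_def head_first_def cong: vec_of_cong)
  qed
  then show ?thesis
    unfolding layer_position_def by (simp add: apply_layer_states add.assoc cong: vec_of_cong)
qed

lemmas sum_linear_simps = distrib_right sum.distrib left_diff_distrib sum_subtractf

lemma argmax_head_successor:
  assumes "p < n" "\<And>i. st i c_pos = inv_succ i" "\<And>i. st i c_one = 1"
  shows "argmax_set head_successor (states n st) p = {cyclic_succ n p}"
proof (rule argmax_set_eq_singleton)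
  show "cyclic_succ n p < length (states n st)"
    using assms(1) by (simp add: cyclic_succ_less)
  show "score head_successor (states n st) p q < score head_successor (states n st) p (cyclic_succ n p)"
    if "q < length (states n st)" "q \<noteq> cyclic_succ n p" for q
    using that assms cyclic_succ_score_max[OF assms(1), of q] cyclic_succ_less[of n p]
    by (simp add: head_successor_def score_states)
qed

lemma argmax_head_prev:
  assumes "p < n" "\<And>i. st i c_pos = inv_succ i" "\<And>i. st i c_one = 1"
    "\<And>i. st i c_next = inv_succ (cyclic_succ n i)"
    "\<And>i. st i c_next_start = (if cyclic_succ n i = 0 then 1 else 0)"
  shows "argmax_set (head_prev V) (states n st) p = {p - 1}"
proof (rule argmax_set_eq_singleton)
  show "p - 1 < length (states n st)"
    using assms(1) by simp
  have "score (head_prev V) (states n st) p q = 4 * prev_score n p q" if "q < n" for q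
    using that assms
    by (simp add: head_prev_def score_states sum_linear_simps)
      (simp add: prev_score_def cyclic_succ_def algebra_simps)
  then show "score (head_prev V) (states n st) p q < score (head_prev V) (states n st) p (p - 1)"
    if "q < length (states n st)" "q \<noteq> p - 1" for q
    using that prev_score_max[OF assms(1), of q] assms(1) by simp
qed

lemma argmax_head_last_marked:
  assumes "p < n" "\<And>i. st i c_pos = inv_succ i" "\<And>i. st i c_one = 1"
    "\<And>i. st i c_start = (if i = 0 then 1 else 0)" "\<And>i. st i D = 0 \<or> st i D = 1" "st 0 D = 0"
  shows "argmax_set (head_last_marked V) (states n st) p = {last_marked (\<lambda>i. st i D) p}"
proof (rule argmax_set_eq_singleton)
  show "last_marked (\<lambda>i. st i D) p < length (states n st)"
    using assms(1) last_marked_le[of "\<lambda>i. st i D" p] by simp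
  show "score (head_last_marked V) (states n st) p q
      < score (head_last_marked V) (states n st) p (last_marked (\<lambda>i. st i D) p)"
    if "q < length (states n st)" "q \<noteq> last_marked (\<lambda>i. st i D) p" for q
    using that assms last_marked_score_max[of "\<lambda>i. st i D", OF assms(5,6) that(2)]
      last_marked_le[of "\<lambda>i. st i D" p]
    by (simp add: head_last_marked_def score_states sum_linear_simps)
qed

lemma argmax_head_next_marked:
  assumes "p < n" "\<And>i. st i c_pos = inv_succ i" "\<And>i. st i c_one = 1"
    "\<And>i. st i c_start = (if i = 0 then 1 else 0)" "\<And>i. st i 0 = 0 \<or> st i 0 = 1" "st 0 0 = 0"
  shows "argmax_set (head_next_marked V) (states n st) p = {next_marked (\<lambda>i. st i 0) n p}"
proof (rule argmax_set_eq_singleton)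
  show "next_marked (\<lambda>i. st i 0) n p < length (states n st)"
    using assms(1) by (simp add: next_marked_less)
  show "score (head_next_marked V) (states n st) p q
      < score (head_next_marked V) (states n st) p (next_marked (\<lambda>i. st i 0) n p)"
    if "q < length (states n st)" "q \<noteq> next_marked (\<lambda>i. st i 0) n p" for q
    using that assms next_marked_score_max[of "\<lambda>i. st i 0", OF assms(5,6), of q n p]
      next_marked_less[of n "\<lambda>i. st i 0" p]
    by (simp add: head_next_marked_def score_states sum_linear_simps)
qed

end

subsection \<open>Running the transformers on an encoded word\<close>

lemma filter_take_skip:
  assumes "k \<le> j" "\<And>m. k \<le> m \<Longrightarrow> m < j \<Longrightarrow> m < length xs \<Longrightarrow> \<not> P (xs ! m)"
  shows "filter P (take j xs) = filter P (take k xs)"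
proof -
  have "take j xs = take k xs @ take (j - k) (drop k xs)"
    using take_add[of k "j - k" xs] assms(1) by simp
  moreover have "filter P (take (j - k) (drop k xs)) = []"
    using assms(2) by (auto simp: filter_empty_conv in_set_conv_nth)
  ultimately show ?thesis
    by simp
qed

lemma filter_drop_skip:
  assumes "k \<le> j" "\<And>m. k \<le> m \<Longrightarrow> m < j \<Longrightarrow> m < length xs \<Longrightarrow> \<not> P (xs ! m)"
  shows "filter P (drop k xs) = filter P (drop j xs)"
proof -
  have "drop k xs = take (j - k) (drop k xs) @ drop j xs"
    using append_take_drop_id[of "j - k" "drop k xs"] assms(1) by simp
  moreover have "filter P (take (j - k) (drop k xs)) = []"
    using assms(2) by (auto simp: filter_empty_conv in_set_conv_nth)
  ultimately show ?thesis
    by (metis append_Nil filter_append)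
qed

locale encoded_word = block_layout +
  fixes enc :: "nat option \<Rightarrow> real list" and w :: "nat option list"
  assumes length_enc: "u \<in> set w \<Longrightarrow> length (enc u) = D"
    and enc_None: "enc None = replicate D 0"
    and enc_Some_flag: "u \<in> set w \<Longrightarrow> u \<noteq> None \<Longrightarrow> enc u ! 0 = 1"
begin

abbreviation "N \<equiv> length w"

definition n :: "nat" where
  "n = Suc N"

definition tok_vec :: "nat option \<Rightarrow> nat \<Rightarrow> real" where
  "tok_vec u t = (if t < D then enc u ! t else 0)"

text \<open>Position \<open>i\<close> of the transformer input carries the token \<open>w ! (i - 1)\<close>; position 0 is the
  starter token, whose token block is that of \<open>None\<close>.\<close>

definition tok :: "nat \<Rightarrow> nat \<Rightarrow> real" where
  "tok i = (if 1 \<le> i \<and> i \<le> N then tok_vec (w ! (i - 1)) else tok_vec None)"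

lemma tok_vec_None [simp]: "tok_vec None = empty_block"
  by (auto simp: tok_vec_def enc_None)

lemma tok_0 [simp]: "tok 0 = empty_block"
  by (simp add: tok_def)

lemma tok_flag: "tok i 0 = (if 1 \<le> i \<and> i \<le> N \<and> w ! (i - 1) \<noteq> None then 1 else 0)"
proof (cases "1 \<le> i \<and> i \<le> N")
  case True
  then have "w ! (i - 1) \<in> set w"
    by (intro nth_mem) auto
  then show ?thesis
    using True enc_Some_flag by (auto simp: tok_def tok_vec_def enc_None)
qed (auto simp: tok_def tok_vec_def enc_None)

lemma tok_flag_01: "tok i 0 = 0 \<or> tok i 0 = 1"
  by (simp add: tok_flag)

definition st0 :: "nat \<Rightarrow> nat \<Rightarrow> real" where
  "st0 i = layout (tok i) empty_block empty_block empty_block empty_block empty_block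
    (if i = 0 then 1 else 0) 0 0 0 0"

definition st1 :: "nat \<Rightarrow> nat \<Rightarrow> real" where
  "st1 i = layout (tok i) empty_block empty_block empty_block empty_block empty_block
    (if i = 0 then 1 else 0) 1 (inv_succ i) 0 0"

lemma input_states: "vec_of dm (slot c_start 1) # map (\<lambda>a. pad dm (enc a)) w = states n st0"
proof (rule nth_equalityI)
  fix i
  assume "i < length (vec_of dm (slot c_start 1) # map (\<lambda>a. pad dm (enc a)) w)"
  then have i: "i < n"
    by (simp add: n_def)
  show "(vec_of dm (slot c_start 1) # map (\<lambda>a. pad dm (enc a)) w) ! i = states n st0 ! i"
  proof (cases i)
    case 0
    then show ?thesis
      using i by (auto simp: st0_def layout_def block_def slot_def intro!: vec_of_cong)
  next
    case (Suc k)
    then have k: "k < N" "length (enc (w ! k)) = D"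
      using i length_enc by (simp_all add: n_def)
    have "pad dm (enc (w ! k)) = vec_of dm (st0 (Suc k))"
      using k by (intro nth_equalityI)
        (auto simp: pad_def nth_append dm_def st0_def layout_def block_def slot_def tok_def tok_vec_def)
    then show ?thesis
      using Suc i k by simp
  qed
qed (simp add: n_def)

lemma apply_layer1: "apply_layer layer_position (states n st0) = states n st1"
proof (subst apply_layer_position)
  show "\<And>i. st0 i c_start = (if i = 0 then 1 else 0)"
    by (simp add: st0_def)
  show "states n (\<lambda>i k. st0 i k + slot c_pos (inv_succ i) k + slot c_one 1 k) = states n st1"
    by (intro map_cong refl vec_of_cong) (simp add: st0_def st1_def layout_def)
qed

definition st2 :: "nat \<Rightarrow> nat \<Rightarrow> real" where
  "st2 i = layout (tok i) empty_block empty_block empty_block empty_block empty_block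
    (if i = 0 then 1 else 0) 1 (inv_succ i) (inv_succ (cyclic_succ n i)) (if cyclic_succ n i = 0 then 1 else 0)"

lemma apply_layer2: "apply_layer layer_successor (states n st1) = states n st2"
  unfolding layer_successor_def
proof (rule apply_layer_single_target[OF head_successor_def])
  show "argmax_set head_successor (states n st1) p = {cyclic_succ n p}" if "p < n" for p
    using that by (rule argmax_head_successor) (simp_all add: st1_def)
qed (simp_all add: cyclic_succ_less n_def sum_linear_simps st1_def st2_def, simp add: layout_def)

definition st3 :: "nat \<Rightarrow> nat \<Rightarrow> real" where
  "st3 i = layout (tok i) (tok (i - 1)) empty_block empty_block empty_block empty_block
    (if i = 0 then 1 else 0) 1 (inv_succ i) (inv_succ (cyclic_succ n i)) (if cyclic_succ n i = 0 then 1 else 0)"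

lemma apply_layer3: "apply_layer left_layer3 (states n st2) = states n st3"
  unfolding left_layer3_def
proof (rule apply_layer_single_target[OF head_prev_def])
  show "argmax_set (head_prev (copy_block 0 1)) (states n st2) p = {p - 1}" if "p < n" for p
    using that by (rule argmax_head_prev) (simp_all add: st2_def)
qed (simp_all add: st2_def st3_def, simp add: layout_def)

text \<open>Layer 3 stores the token of position \<open>j - 1\<close> at \<open>j\<close>, so \<open>marked_left i - 1\<close> is the position
  of the nearest token strictly left of \<open>i\<close> that is not \<open>None\<close>.\<close>

definition marked_left :: "nat \<Rightarrow> nat" where
  "marked_left = last_marked (\<lambda>j. tok (j - 1) 0)"

definition left_near :: "nat \<Rightarrow> nat \<Rightarrow> real" where
  "left_near i = tok (marked_left i - 1)"

definition left_second :: "nat \<Rightarrow> nat \<Rightarrow> real" where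
  "left_second i = left_near (marked_left i - 1)"

lemma marked_left_less: "p < n \<Longrightarrow> marked_left p < n"
  using last_marked_le[of "\<lambda>j. tok (j - 1) 0" p] unfolding marked_left_def by linarith

definition st4 :: "nat \<Rightarrow> nat \<Rightarrow> real" where
  "st4 i = layout (tok i) (tok (i - 1)) (left_near i) empty_block empty_block empty_block
    (if i = 0 then 1 else 0) 1 (inv_succ i) (inv_succ (cyclic_succ n i)) (if cyclic_succ n i = 0 then 1 else 0)"

lemma apply_layer4: "apply_layer left_layer4 (states n st3) = states n st4"
  unfolding left_layer4_def
proof (rule apply_layer_single_target[OF head_last_marked_def])
  show "argmax_set (head_last_marked (copy_block 1 2)) (states n st3) p = {marked_left p}" if "p < n" for p
    using argmax_head_last_marked[OF that, of st3] tok_flag_01 by (simp add: st3_def marked_left_def)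
qed (simp_all add: marked_left_less st3_def st4_def left_near_def, simp add: layout_def)

definition st5 :: "nat \<Rightarrow> nat \<Rightarrow> real" where
  "st5 i = layout (tok i) (tok (i - 1)) (left_near i) (left_near (i - 1)) empty_block empty_block
    (if i = 0 then 1 else 0) 1 (inv_succ i) (inv_succ (cyclic_succ n i)) (if cyclic_succ n i = 0 then 1 else 0)"

lemma apply_layer5: "apply_layer left_layer5 (states n st4) = states n st5"
  unfolding left_layer5_def
proof (rule apply_layer_single_target[OF head_prev_def])
  show "argmax_set (head_prev (copy_block 2 3)) (states n st4) p = {p - 1}" if "p < n" for p
    using that by (rule argmax_head_prev) (simp_all add: st4_def)
qed (simp_all add: st4_def st5_def, simp add: layout_def)

definition st6 :: "nat \<Rightarrow> nat \<Rightarrow> real" where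
  "st6 i = layout (left_near i) (left_second i) empty_block empty_block empty_block empty_block 0 0 0 0 0"

lemma apply_layer6: "apply_layer left_layer6 (states n st5) = states n st6"
  unfolding left_layer6_def
proof (rule apply_layer_single_target[OF head_last_marked_def])
  show "argmax_set (head_last_marked (\<lambda>r j. copy_block 1 4 r j + copy_block 3 5 r j)) (states n st5) p
      = {marked_left p}" if "p < n" for p
    using argmax_head_last_marked[OF that, of st5] tok_flag_01 by (simp add: st5_def marked_left_def)
  show "marked_left p < n" if "p < n" for p
    using that by (rule marked_left_less)
next
  fix i k
  assume "k < dm"
  define gathered where "gathered = layout (tok i) (tok (i - 1)) (left_near i) (left_near (i - 1))
    (left_near i) (left_second i) (if i = 0 then 1 else 0) 1 (inv_succ i) (inv_succ (cyclic_succ n i))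
    (if cyclic_succ n i = 0 then 1 else 0)"
  have "st5 i j + (\<Sum>l<dm. (copy_block 1 4 j l + copy_block 3 5 j l) * st5 (marked_left i) l) = gathered j" for j
    by (simp add: sum_linear_simps st5_def gathered_def left_near_def left_second_def) (simp add: layout_def)
  then show "(\<Sum>j<dm. output_map k j * (st5 i j
      + (\<Sum>l<dm. (copy_block 1 4 j l + copy_block 3 5 j l) * st5 (marked_left i) l))) = st6 i k"
    by (simp add: output_map_def sum_linear_simps gathered_def st6_def) (simp add: layout_def)
qed

definition marked_right :: "nat \<Rightarrow> nat" where
  "marked_right = next_marked (\<lambda>j. tok j 0) n"

definition right_near :: "nat \<Rightarrow> nat \<Rightarrow> real" where
  "right_near i = tok (marked_right i)"

definition right_second :: "nat \<Rightarrow> nat \<Rightarrow> real" where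
  "right_second i = right_near (marked_right i)"

lemma marked_right_0 [simp]: "marked_right 0 = 0"
  by (simp add: marked_right_def next_marked_def)

lemma marked_right_less: "marked_right p < n"
  by (simp add: marked_right_def next_marked_less n_def)

lemma argmax_head_next_marked_tok:
  assumes "p < n" "\<And>i. st i c_pos = inv_succ i" "\<And>i. st i c_one = 1"
    "\<And>i. st i c_start = (if i = 0 then 1 else 0)" "\<And>i. st i 0 = tok i 0"
  shows "argmax_set (head_next_marked V) (states n st) p = {marked_right p}"
  using argmax_head_next_marked[of p n st] assms tok_flag_01 by (simp add: marked_right_def)

definition right_st2 :: "nat \<Rightarrow> nat \<Rightarrow> real" where
  "right_st2 i = layout (tok i) empty_block (right_near i) empty_block empty_block empty_block
    (if i = 0 then 1 else 0) 1 (inv_succ i) 0 0"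

lemma apply_right_layer2: "apply_layer right_layer2 (states n st1) = states n right_st2"
  unfolding right_layer2_def
proof (rule apply_layer_single_target[OF head_next_marked_def])
  show "argmax_set (head_next_marked (copy_block 0 2)) (states n st1) p = {marked_right p}" if "p < n" for p
    using that by (rule argmax_head_next_marked_tok) (simp_all add: st1_def)
qed (simp_all add: marked_right_less st1_def right_st2_def right_near_def, simp add: layout_def)

definition right_st3 :: "nat \<Rightarrow> nat \<Rightarrow> real" where
  "right_st3 i = layout (right_near i) (right_second i) empty_block empty_block empty_block empty_block
    0 0 0 0 0"

lemma apply_right_layer3: "apply_layer right_layer3 (states n right_st2) = states n right_st3"
  unfolding right_layer3_def
proof (rule apply_layer_single_target[OF head_next_marked_def])
  show "argmax_set (head_next_marked (\<lambda>r j. copy_block 0 4 r j + copy_block 2 5 r j)) (states n right_st2) p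
      = {marked_right p}" if "p < n" for p
    using that by (rule argmax_head_next_marked_tok) (simp_all add: right_st2_def)
  show "marked_right p < n" for p
    by (rule marked_right_less)
next
  fix i k
  assume "k < dm"
  define gathered where "gathered = layout (tok i) empty_block (right_near i) empty_block
    (right_near i) (right_second i) (if i = 0 then 1 else 0) 1 (inv_succ i) 0 0"
  have "right_st2 i j + (\<Sum>l<dm. (copy_block 0 4 j l + copy_block 2 5 j l) * right_st2 (marked_right i) l)
      = gathered j" for j
    by (simp add: sum_linear_simps right_st2_def gathered_def right_near_def right_second_def)
      (simp add: layout_def)
  then show "(\<Sum>j<dm. output_map k j * (right_st2 i j
      + (\<Sum>l<dm. (copy_block 0 4 j l + copy_block 2 5 j l) * right_st2 (marked_right i) l))) = right_st3 i k"
    by (simp add: output_map_def sum_linear_simps gathered_def right_st3_def) (simp add: layout_def)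
qed

lemma run_tf_left: "run_tf tf_left (map (\<lambda>a. pad dm (enc a)) w) = states n st6"
  unfolding run_tf_def tf_left_def
  by (simp add: input_states apply_layer1 apply_layer2 apply_layer3 apply_layer4 apply_layer5 apply_layer6
      apply_zero_layers)

lemma run_tf_right: "run_tf tf_right (map (\<lambda>a. pad dm (enc a)) w) = states n right_st3"
  unfolding run_tf_def tf_right_def
  by (simp add: input_states apply_layer1 apply_right_layer2 apply_right_layer3 apply_zero_layers)

lemma vec_of_output_layout:
  assumes "length (enc u1) = D" "length (enc u2) = D"
  shows "vec_of dm (layout (tok_vec u1) (tok_vec u2) empty_block empty_block empty_block empty_block 0 0 0 0 0)
    = pad dm (enc u1 @ enc u2)"
  using assms by (intro nth_equalityI)
    (auto simp: layout_def block_def slot_def slot_defs tok_vec_def pad_def nth_append dm_def)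

definition lefts :: "nat \<Rightarrow> nat option list" where
  "lefts i = rev (filter (\<lambda>u. u \<noteq> None) (take (i - 1) w))"

definition rights :: "nat \<Rightarrow> nat option list" where
  "rights i = filter (\<lambda>u. u \<noteq> None) (drop i w)"

lemma lefts_skip:
  assumes "k \<le> i - 1" "\<And>m. k \<le> m \<Longrightarrow> m < i - 1 \<Longrightarrow> m < N \<Longrightarrow> w ! m = None"
  shows "lefts i = rev (filter (\<lambda>u. u \<noteq> None) (take k w))"
  unfolding lefts_def using assms by (subst filter_take_skip) auto

lemma marked_left_cases:
  obtains (none) "marked_left i = 0" "lefts i = []"
  | (found) k where "marked_left i = Suc k" "1 \<le> k" "k < i" "k \<le> N" "w ! (k - 1) \<noteq> None"
      "lefts i = w ! (k - 1) # lefts k"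
proof -
  let ?c = "\<lambda>j. tok (j - 1) 0"
  have mark: "?c j = 1 \<longleftrightarrow> 2 \<le> j \<and> j - 1 \<le> N \<and> w ! (j - 2) \<noteq> None" for j
    by (auto simp: tok_flag numeral_2_eq_2)
  have shifted_mark: "m + 2 \<le> i \<and> ?c (m + 2) = 1" if "m < N" "m < i - 1" "w ! m \<noteq> None" for m
    using that mark[of "m + 2"] by auto
  show ?thesis
  proof (cases "\<exists>j\<le>i. ?c j = 1")
    case True
    note J = last_marked_props[OF True, folded marked_left_def]
    define k where "k = marked_left i - 1"
    have k: "marked_left i = Suc k" "1 \<le> k" "k < i" "k \<le> N" "w ! (k - 1) \<noteq> None"
      using J(1,2) mark[of "marked_left i"] by (auto simp: k_def numeral_2_eq_2)
    have "w ! m = None" if "k \<le> m" "m < i - 1" "m < N" for m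
      using J(3) shifted_mark[of m] that k(1) by fastforce
    then have "lefts i = rev (filter (\<lambda>u. u \<noteq> None) (take (Suc (k - 1)) w))"
      using k(2,3) by (intro lefts_skip) auto
    also have "\<dots> = w ! (k - 1) # lefts k"
      using take_Suc_conv_app_nth[of "k - 1" w] k(2,4,5) by (simp add: lefts_def)
    finally show ?thesis
      using k by (intro found) auto
  next
    case False
    then have "marked_left i = 0"
      unfolding marked_left_def last_marked_def by (simp only: if_False)
    moreover have "w ! m = None" if "m < i - 1" "m < N" for m
      using False shifted_mark[OF that(2,1)] by blast
    then have "lefts i = []"
      by (subst lefts_skip[of 0]) auto
    ultimately show ?thesis
      by (rule none)
  qed
qed

lemma left_near_correct: "left_near i = tok_vec (nth_or_none (lefts i) 0)"
proof (cases i rule: marked_left_cases)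
  case none
  then show ?thesis
    by (simp add: left_near_def nth_or_none_def)
next
  case (found k)
  then show ?thesis
    by (simp add: left_near_def nth_or_none_def tok_def)
qed

lemma left_second_correct: "left_second i = tok_vec (nth_or_none (lefts i) 1)"
proof (cases i rule: marked_left_cases)
  case none
  then show ?thesis
    by (simp add: left_second_def left_near_correct lefts_def nth_or_none_def)
next
  case (found k)
  then show ?thesis
    by (simp add: left_second_def left_near_correct nth_or_none_def)
qed

lemma rights_skip:
  assumes "i \<le> k" "\<And>m. i \<le> m \<Longrightarrow> m < k \<Longrightarrow> m < N \<Longrightarrow> w ! m = None"
  shows "rights i = filter (\<lambda>u. u \<noteq> None) (drop k w)"
  unfolding rights_def using assms by (subst filter_drop_skip) auto

lemma marked_right_cases:
  assumes "1 \<le> i"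
  obtains (none) "marked_right i = 0" "rights i = []"
  | (found) "i < marked_right i" "marked_right i \<le> N" "w ! (marked_right i - 1) \<noteq> None"
      "rights i = w ! (marked_right i - 1) # rights (marked_right i)"
proof -
  let ?b = "\<lambda>j. tok j 0"
  have mark: "?b j = 1 \<longleftrightarrow> 1 \<le> j \<and> j \<le> N \<and> w ! (j - 1) \<noteq> None" for j
    by (simp add: tok_flag)
  show ?thesis
  proof (cases "\<exists>j. i < j \<and> j < n \<and> ?b j = 1")
    case True
    have "i \<noteq> 0"
      using assms by simp
    note K = next_marked_props[OF True this, folded marked_right_def]
    define k where "k = marked_right i"
    have k: "i < k" "k \<le> N" "w ! (k - 1) \<noteq> None"
      using K(1,3) mark[of "marked_right i"] assms by (auto simp: k_def)
    have "w ! m = None" if "i \<le> m" "m < k - 1" "m < N" for m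
      using K(4)[of "m + 1"] mark[of "m + 1"] that by (fastforce simp: k_def n_def)
    then have "rights i = filter (\<lambda>u. u \<noteq> None) (drop (k - 1) w)"
      using k(1) by (intro rights_skip) auto
    also have "\<dots> = w ! (k - 1) # rights k"
      using Cons_nth_drop_Suc[of "k - 1" w, symmetric] k by (simp add: rights_def)
    finally show ?thesis
      using k by (intro found) (auto simp: k_def)
  next
    case False
    then have "marked_right i = 0"
      by (auto simp: marked_right_def next_marked_def)
    moreover have "w ! m = None" if "i \<le> m" "m < N" for m
      using False mark[of "m + 1"] that by (auto simp: n_def)
    then have "rights i = []"
      by (subst rights_skip[of i "max i N"]) auto
    ultimately show ?thesis
      by (rule none)
  qed
qed

lemma right_near_correct:
  assumes "1 \<le> i"
  shows "right_near i = tok_vec (nth_or_none (rights i) 0)"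
  using assms by (cases rule: marked_right_cases) (simp_all add: right_near_def nth_or_none_def tok_def)

lemma right_second_correct:
  assumes "1 \<le> i"
  shows "right_second i = tok_vec (nth_or_none (rights i) 1)"
  using assms
proof (cases rule: marked_right_cases)
  case none
  then show ?thesis
    by (simp add: right_second_def right_near_def nth_or_none_def)
next
  case found
  then show ?thesis
    using right_near_correct[of "marked_right i"] by (simp add: right_second_def nth_or_none_def)
qed

lemma length_enc_nth_or_none: "set L \<subseteq> set w \<Longrightarrow> length (enc (nth_or_none L j)) = D"
  by (auto simp: nth_or_none_def enc_None intro!: length_enc)

lemma tf_left_output:
  assumes "p < N"
  shows "run_tf tf_left (map (\<lambda>a. pad dm (enc a)) w) ! Suc p = pad dm (enc_pair enc enc (nearest_left2 w ! p))"
proof -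
  have "set (lefts (Suc p)) \<subseteq> set w"
    by (auto simp: lefts_def dest: in_set_takeD)
  then have "vec_of dm (st6 (Suc p))
      = pad dm (enc (nth_or_none (lefts (Suc p)) 0) @ enc (nth_or_none (lefts (Suc p)) 1))"
    by (simp add: st6_def left_near_correct left_second_correct vec_of_output_layout length_enc_nth_or_none)
  then show ?thesis
    using assms by (simp add: run_tf_left n_def enc_pair_def nearest_left2_def lefts_def Let_def del: upt_Suc)
qed

lemma tf_right_output:
  assumes "p < N"
  shows "run_tf tf_right (map (\<lambda>a. pad dm (enc a)) w) ! Suc p = pad dm (enc_pair enc enc (nearest_right2 w ! p))"
proof -
  have "set (rights (Suc p)) \<subseteq> set w"
    by (auto simp: rights_def dest: in_set_dropD)
  then have "vec_of dm (right_st3 (Suc p))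
      = pad dm (enc (nth_or_none (rights (Suc p)) 0) @ enc (nth_or_none (rights (Suc p)) 1))"
    by (simp add: right_st3_def right_near_correct right_second_correct vec_of_output_layout
        length_enc_nth_or_none)
  then show ?thesis
    using assms by (simp add: run_tf_right n_def enc_pair_def nearest_right2_def rights_def Let_def del: upt_Suc)
qed

end

lemma encoded_word_enc_opt:
  assumes "local_type S d \<phi>" "set xs \<subseteq> opt_set S"
  shows "encoded_word d (enc_opt d \<phi>) xs"
proof
  fix u
  assume "u \<in> set xs"
  then have "u = None \<or> (\<exists>t\<in>S. u = Some t)"
    using assms(2) by (auto simp: opt_set_def)
  then show "length (enc_opt d \<phi> u) = block_layout.D d"
    using assms(1) by (auto simp: enc_opt_def block_layout.D_def local_type_def)
  show "u \<noteq> None \<Longrightarrow> enc_opt d \<phi> u ! 0 = 1"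
    by (auto simp: enc_opt_def)
qed (simp add: enc_opt_def block_layout.D_def)

lemma block_layout_dm: "block_layout.dm d = 11 * (d + 1)"
  by (simp add: block_layout.dm_def block_layout.D_def)

lemma representable_nearest_left2:
  assumes "local_type S d \<phi>"
  shows "representable (11 * (d + 1)) 11 11 (opt_set S) (enc_opt d \<phi>)
    (enc_pair (enc_opt d \<phi>) (enc_opt d \<phi>)) nearest_left2"
  unfolding representable_def block_layout_dm[symmetric]
proof (intro bexI[of _ "block_layout.tf_left d"] allI impI)
  fix xs :: "nat option list" and p
  assume "set xs \<subseteq> opt_set S" "p < length xs"
  then interpret encoded_word d "enc_opt d \<phi>" xs
    using assms by (blast intro: encoded_word_enc_opt)
  show "run_tf tf_left (map (\<lambda>a. pad dm (enc_opt d \<phi> a)) xs) ! Suc p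
      = pad dm (enc_pair (enc_opt d \<phi>) (enc_opt d \<phi>) (nearest_left2 xs ! p))"
    using \<open>p < length xs\<close> by (rule tf_left_output)
qed (rule block_layout.tf_left_in_TF)

lemma representable_nearest_right2:
  assumes "local_type S d \<phi>"
  shows "representable (11 * (d + 1)) 11 11 (opt_set S) (enc_opt d \<phi>)
    (enc_pair (enc_opt d \<phi>) (enc_opt d \<phi>)) nearest_right2"
  unfolding representable_def block_layout_dm[symmetric]
proof (intro bexI[of _ "block_layout.tf_right d"] allI impI)
  fix xs :: "nat option list" and p
  assume "set xs \<subseteq> opt_set S" "p < length xs"
  then interpret encoded_word d "enc_opt d \<phi>" xs
    using assms by (blast intro: encoded_word_enc_opt)
  show "run_tf tf_right (map (\<lambda>a. pad dm (enc_opt d \<phi> a)) xs) ! Suc p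
      = pad dm (enc_pair (enc_opt d \<phi>) (enc_opt d \<phi>) (nearest_right2 xs ! p))"
    using \<open>p < length xs\<close> by (rule tf_right_output)
qed (rule block_layout.tf_right_in_TF)

theorem proposition16:
  shows "\<exists>C::nat. \<forall>(S::nat set) (d::nat) (\<phi>::nat \<Rightarrow> real list). local_type S d \<phi> \<longrightarrow>
     representable (C * (d + 1)) C C (opt_set S) (enc_opt d \<phi>)
        (enc_pair (enc_opt d \<phi>) (enc_opt d \<phi>)) nearest_left2
   \<and> representable (C * (d + 1)) C C (opt_set S) (enc_opt d \<phi>)
        (enc_pair (enc_opt d \<phi>) (enc_opt d \<phi>)) nearest_right2"
  using representable_nearest_left2 representable_nearest_right2 by blast

end
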